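(* Let $G=(U,\alpha)$ and $H=(V,\beta)$ be graphs and let $K=(U\times V,\gamma)$ be a graph. Then $K$ is a graph joining of $G$ and $H$ if and only if $G\mid K$ under $\pi_1$ and $H\mid K$ under $\pi_2$, where $\pi_1(u,v)=u$ and $\pi_2(u,v)=v$.
   Context: A weight function on finite $U$ is $\alpha:U\times U\to\mathbb{R}$, $\alpha\ge0$, symmetric, summing to $1$; degree $p(u)=\sum_{u'}\alpha(u,u')$; a graph is $(U,\alpha)$. For $G=(U,\alpha)$, $H=(V,\beta)$ with degrees $p,q$, a weight joining is a weight function $\gamma$ on $U\times V$ with degree $r(u,v)=\sum_{(u',v')}\gamma((u,v),(u',v'))$ such that $\sum_v r(u,v)=p(u)$, $\sum_u r(u,v)=q(v)$, $p(u)\sum_{\tilde v}\gamma((u,v),(u',\tilde v))=\alpha(u,u')r(u,v)$ and $q(v)\sum_{\tilde u}\gamma((u,v),(\tilde u,v'))=\beta(v,v')r(u,v)$ for all $u,u',v,v'$; a graph joining of $G,H$ is $(U\times V,\gamma)$ with $\gamma$ a weight joining. For graphs $G=(U,\alpha)$, $H=(V,\beta)$ with degrees $p,q$, $H\mid G$ under a surjective map $\phi:U\to V$ means (i) $q(v)=\sum_{u\in\phi^{-1}(v)}p(u)$ for all $v$, and (ii) $q(v)\sum_{u'\in\phi^{-1}(v')}\alpha(u,u')=p(u)\beta(v,v')$ for all $v,v'\in V$ and all $u\in\phi^{-1}(v)$. *)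

theory Defs
  imports Complex_Main
begin

text \<open>A weight function on a finite set U: nonnegative, symmetric, summing to 1.
  Weight functions are represented as curried real-valued functions; only their
  values on U \<times> U are relevant.\<close>
definition weight_function :: "'a set \<Rightarrow> ('a \<Rightarrow> 'a \<Rightarrow> real) \<Rightarrow> bool" where
  "weight_function U \<alpha> \<longleftrightarrow> finite U
     \<and> (\<forall>u\<in>U. \<forall>u'\<in>U. \<alpha> u u' \<ge> 0)
     \<and> (\<forall>u\<in>U. \<forall>u'\<in>U. \<alpha> u u' = \<alpha> u' u)
     \<and> (\<Sum>u\<in>U. \<Sum>u'\<in>U. \<alpha> u u') = 1"

definition deg :: "'a set \<Rightarrow> ('a \<Rightarrow> 'a \<Rightarrow> real) \<Rightarrow> 'a \<Rightarrow> real" where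
  "deg U \<alpha> u = (\<Sum>u'\<in>U. \<alpha> u u')"

abbreviation graph :: "'a set \<Rightarrow> ('a \<Rightarrow> 'a \<Rightarrow> real) \<Rightarrow> bool" where
  "graph U \<alpha> \<equiv> weight_function U \<alpha>"

definition weight_joining ::
  "'a set \<Rightarrow> ('a \<Rightarrow> 'a \<Rightarrow> real) \<Rightarrow> 'b set \<Rightarrow> ('b \<Rightarrow> 'b \<Rightarrow> real)
     \<Rightarrow> ('a \<times> 'b \<Rightarrow> 'a \<times> 'b \<Rightarrow> real) \<Rightarrow> bool" where
  "weight_joining U \<alpha> V \<beta> \<gamma> \<longleftrightarrow>
     weight_function (U \<times> V) \<gamma>
     \<and> (\<forall>u\<in>U. (\<Sum>v\<in>V. deg (U \<times> V) \<gamma> (u, v)) = deg U \<alpha> u)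
     \<and> (\<forall>v\<in>V. (\<Sum>u\<in>U. deg (U \<times> V) \<gamma> (u, v)) = deg V \<beta> v)
     \<and> (\<forall>u\<in>U. \<forall>u'\<in>U. \<forall>v\<in>V.
          deg U \<alpha> u * (\<Sum>v'\<in>V. \<gamma> (u, v) (u', v')) = \<alpha> u u' * deg (U \<times> V) \<gamma> (u, v))
     \<and> (\<forall>v\<in>V. \<forall>v'\<in>V. \<forall>u\<in>U.
          deg V \<beta> v * (\<Sum>u'\<in>U. \<gamma> (u, v) (u', v')) = \<beta> v v' * deg (U \<times> V) \<gamma> (u, v))"

definition graph_joining ::
  "'a set \<Rightarrow> ('a \<Rightarrow> 'a \<Rightarrow> real) \<Rightarrow> 'b set \<Rightarrow> ('b \<Rightarrow> 'b \<Rightarrow> real)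
     \<Rightarrow> ('a \<times> 'b) set \<Rightarrow> ('a \<times> 'b \<Rightarrow> 'a \<times> 'b \<Rightarrow> real) \<Rightarrow> bool" where
  "graph_joining U \<alpha> V \<beta> W \<gamma> \<longleftrightarrow> W = U \<times> V \<and> weight_joining U \<alpha> V \<beta> \<gamma>"

definition graph_divides ::
  "'b set \<Rightarrow> ('b \<Rightarrow> 'b \<Rightarrow> real) \<Rightarrow> 'a set \<Rightarrow> ('a \<Rightarrow> 'a \<Rightarrow> real) \<Rightarrow> ('a \<Rightarrow> 'b) \<Rightarrow> bool" where
  "graph_divides V \<beta> U \<alpha> \<phi> \<longleftrightarrow>
     \<phi> ` U = V
     \<and> (\<forall>v\<in>V. deg V \<beta> v = (\<Sum>u\<in>{u\<in>U. \<phi> u = v}. deg U \<alpha> u))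
     \<and> (\<forall>v\<in>V. \<forall>v'\<in>V. \<forall>u\<in>U. \<phi> u = v \<longrightarrow>
          deg V \<beta> v * (\<Sum>u'\<in>{u'\<in>U. \<phi> u' = v'}. \<alpha> u u') = deg U \<alpha> u * \<beta> v v')"

end

theory Submission
  imports Defs
begin

text \<open>The fibre of the first projection over \<open>u\<close> is \<open>{u} \<times> V\<close>, that of the second over
  \<open>v\<close> is \<open>U \<times> {v}\<close>. Summing over these fibres turns conditions (i) and (ii) of
  \<open>G | K\<close> under \<open>\<pi>\<^sub>1\<close> into the marginal and transition conditions of a weight joining
  for the first coordinate, and likewise for \<open>H | K\<close> under \<open>\<pi>\<^sub>2\<close>. The projections are
  surjective because graphs are nonempty, their weights summing to 1.\<close>

lemma weight_function_nonempty:
  assumes "weight_function U \<alpha>"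
  shows "U \<noteq> {}"
  using assms by (auto simp: weight_function_def)

lemma sum_fst_fiber:
  assumes "u \<in> U"
  shows "(\<Sum>w\<in>{w\<in>U \<times> V. fst w = u}. f w) = (\<Sum>v\<in>V. f (u, v))"
proof -
  have "{w\<in>U \<times> V. fst w = u} = Pair u ` V" using assms by auto
  moreover have "inj_on (Pair u) V" by (auto simp: inj_on_def)
  ultimately show ?thesis by (simp add: sum.reindex)
qed

lemma sum_snd_fiber:
  assumes "v \<in> V"
  shows "(\<Sum>w\<in>{w\<in>U \<times> V. snd w = v}. f w) = (\<Sum>u\<in>U. f (u, v))"
proof -
  have "{w\<in>U \<times> V. snd w = v} = (\<lambda>u. (u, v)) ` U" using assms by auto
  moreover have "inj_on (\<lambda>u. (u, v)) U" by (auto simp: inj_on_def)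
  ultimately show ?thesis by (simp add: sum.reindex)
qed

lemma graph_divides_fst_iff:
  assumes "V \<noteq> {}"
  shows "graph_divides U \<alpha> (U \<times> V) \<gamma> fst \<longleftrightarrow>
           (\<forall>u\<in>U. (\<Sum>v\<in>V. deg (U \<times> V) \<gamma> (u, v)) = deg U \<alpha> u)
         \<and> (\<forall>u\<in>U. \<forall>u'\<in>U. \<forall>v\<in>V.
              deg U \<alpha> u * (\<Sum>v'\<in>V. \<gamma> (u, v) (u', v')) = \<alpha> u u' * deg (U \<times> V) \<gamma> (u, v))"
proof -
  have "fst ` (U \<times> V) = U" using assms by auto
  then show ?thesis
    unfolding graph_divides_def by (auto simp: sum_fst_fiber mult.commute)
qed

lemma graph_divides_snd_iff:
  assumes "U \<noteq> {}"
  shows "graph_divides V \<beta> (U \<times> V) \<gamma> snd \<longleftrightarrow>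
           (\<forall>v\<in>V. (\<Sum>u\<in>U. deg (U \<times> V) \<gamma> (u, v)) = deg V \<beta> v)
         \<and> (\<forall>v\<in>V. \<forall>v'\<in>V. \<forall>u\<in>U.
              deg V \<beta> v * (\<Sum>u'\<in>U. \<gamma> (u, v) (u', v')) = \<beta> v v' * deg (U \<times> V) \<gamma> (u, v))"
proof -
  have "snd ` (U \<times> V) = V" using assms by auto
  then show ?thesis
    unfolding graph_divides_def by (auto simp: sum_snd_fiber mult.commute)
qed

theorem proposition4p2:
  fixes U :: "'a set" and V :: "'b set"
    and \<alpha> :: "'a \<Rightarrow> 'a \<Rightarrow> real" and \<beta> :: "'b \<Rightarrow> 'b \<Rightarrow> real"
    and \<gamma> :: "'a \<times> 'b \<Rightarrow> 'a \<times> 'b \<Rightarrow> real"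
  assumes "graph U \<alpha>" and "graph V \<beta>" and "graph (U \<times> V) \<gamma>"
  shows "graph_joining U \<alpha> V \<beta> (U \<times> V) \<gamma> \<longleftrightarrow>
           graph_divides U \<alpha> (U \<times> V) \<gamma> fst \<and> graph_divides V \<beta> (U \<times> V) \<gamma> snd"
proof -
  have "U \<noteq> {}" and "V \<noteq> {}"
    using assms(1,2) by (simp_all add: weight_function_nonempty)
  then show ?thesis
    unfolding graph_joining_def weight_joining_def
    using assms(3) by (simp add: graph_divides_fst_iff graph_divides_snd_iff conj_ac)
qed

end
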